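(* Let $q=2^m$ with $m\ge 4$ even. Then the incidence structure $(U_{q+1},\mathcal B_4(\mathcal C_{\{3,5\}}^\perp|_{\mathrm{GF}(q)}))$ formed by the supports of the minimum-weight codewords of $\mathcal C_{\{3,5\}}^\perp|_{\mathrm{GF}(q)}$ is a $3$-$(q+1,4,2)$ design.
   Context: $U_{q+1}$ is the set of $(q+1)$-th roots of unity in $\mathrm{GF}(q^2)$; coordinates are indexed by $U_{q+1}$. $\mathcal C_{\{3,5\}}=\{(a_3u^3+a_{q-2}u^{q-2}+a_5u^5+a_{q-4}u^{q-4})_{u\in U_{q+1}}: a_i\in\mathrm{GF}(q^2)\}$, $\mathcal C_{\{3,5\}}^\perp$ its dual under the standard inner product, $\mathcal C^\perp_{\{3,5\}}|_{\mathrm{GF}(q)}=\mathcal C^\perp_{\{3,5\}}\cap\mathrm{GF}(q)^{q+1}$ (its minimum distance is $4$). $\mathcal B_4(\mathcal C)$ is the set of supports of weight-$4$ codewords. A $t$-$(v,k,\lambda)$ design: $v$ points, blocks of size $k$, every $t$ points in exactly $\lambda$ blocks. *)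

theory Defs
  imports Main
begin

text \<open>The field GF(q^2) is modelled as a finite field type 'a with CARD('a) = q^2.
  Vectors indexed by U_{q+1} are functions 'a => 'a vanishing outside U_{q+1}.\<close>

definition roots_unity :: "nat \<Rightarrow> 'a::field set" where
  "roots_unity q = {u. u ^ (q + 1) = 1}"

definition is_vector :: "nat \<Rightarrow> ('a::field \<Rightarrow> 'a) \<Rightarrow> bool" where
  "is_vector q c \<longleftrightarrow> (\<forall>u. u \<notin> roots_unity q \<longrightarrow> c u = 0)"

definition code_C35 :: "nat \<Rightarrow> ('a::field \<Rightarrow> 'a) set" where
  "code_C35 q = {c. \<exists>a3 aq2 a5 aq4. \<forall>u. c u =
      (if u \<in> roots_unity q
       then a3 * u ^ 3 + aq2 * u ^ (q - 2) + a5 * u ^ 5 + aq4 * u ^ (q - 4)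
       else 0)}"

definition dual_code :: "nat \<Rightarrow> ('a::field \<Rightarrow> 'a) set \<Rightarrow> ('a \<Rightarrow> 'a) set" where
  "dual_code q C = {c. is_vector q c \<and>
      (\<forall>x\<in>C. (\<Sum>u\<in>roots_unity q. c u * x u) = 0)}"

definition subfield_subcode :: "nat \<Rightarrow> ('a::field \<Rightarrow> 'a) set \<Rightarrow> ('a \<Rightarrow> 'a) set" where
  "subfield_subcode q C = {c \<in> C. \<forall>u\<in>roots_unity q. c u ^ q = c u}"

definition supp_vec :: "nat \<Rightarrow> ('a::field \<Rightarrow> 'a) \<Rightarrow> 'a set" where
  "supp_vec q c = {u \<in> roots_unity q. c u \<noteq> 0}"

definition blocks_w :: "nat \<Rightarrow> nat \<Rightarrow> ('a::field \<Rightarrow> 'a) set \<Rightarrow> 'a set set" where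
  "blocks_w q w C = {supp_vec q c | c. c \<in> C \<and> card (supp_vec q c) = w}"

definition is_design :: "nat \<Rightarrow> nat \<Rightarrow> nat \<Rightarrow> nat \<Rightarrow> 'p set \<Rightarrow> 'p set set \<Rightarrow> bool" where
  "is_design t v k lam P B \<longleftrightarrow> finite P \<and> card P = v \<and>
     (\<forall>b\<in>B. b \<subseteq> P \<and> card b = k) \<and>
     (\<forall>T. T \<subseteq> P \<longrightarrow> card T = t \<longrightarrow> card {b\<in>B. T \<subseteq> b} = lam)"

end

theory Submission
  imports Defs "HOL-Computational_Algebra.Polynomial" "HOL-Computational_Algebra.Primes"
begin

text \<open>
  Squaring permutes the unit circle \<open>U = U_(q+1)\<close>. Dividing a codeword by \<open>u^5\<close> and putting
  \<open>w = u^2\<close>, the parity checks of the dual of \<open>C_{3,5}\<close> become the vanishing of the power sums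
  of \<open>w\<close> of degrees 0, 1, 4 and 5. So four points carry a codeword iff the generalised
  Vandermonde determinant with these exponents vanishes, i.e. iff the Schur polynomial
  \<open>s_(2,2)(w1, w2, w3, w4)\<close> vanishes. The \<open>3 \<times> 3\<close> minors (Vandermonde times \<open>h_2\<close>) do not
  vanish on \<open>U\<close>, so that codeword is unique up to a scalar, and since the dual code is stable
  under \<open>c \<mapsto> c^q\<close> it can be taken over \<open>GF(q)\<close>.

  For even \<open>m\<close>, \<open>GF(q)\<close> contains a primitive cube root of unity \<open>\<omega>\<close>. In characteristic 2,
  \<open>s_(2,2)(a, b, c, x)\<close> then splits into two linear factors in \<open>x\<close> built from the Lagrange
  resolvents \<open>a + \<omega> b + \<omega>^2 c\<close>; their roots are two distinct points of \<open>U\<close> outside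
  \<open>{a, b, c}\<close>.
\<close>

section \<open>Finite fields of characteristic 2\<close>

lemma of_nat_card_UNIV_eq_0: "of_nat (card (UNIV :: 'a::{ring_1,finite} set)) = (0::'a)"
proof -
  have "(\<Sum>y\<in>UNIV. 1 + y) = (\<Sum>y\<in>UNIV. y::'a)"
    by (rule sum.reindex_bij_witness[of _ "\<lambda>y. y - 1" "\<lambda>y. 1 + y"]) auto
  then show ?thesis
    by (simp add: sum.distrib)
qed

lemma CHAR_eq_2_if_card_UNIV:
  assumes "card (UNIV :: 'a::{field,finite} set) = 2 ^ n"
  shows "CHAR('a) = 2"
proof -
  have "prime CHAR('a)"
    by (rule prime_CHAR_semidom) (simp add: finite_imp_CHAR_pos)
  moreover have "CHAR('a) dvd 2 ^ n"
    using of_nat_card_UNIV_eq_0[where 'a='a] unfolding of_nat_eq_0_iff_char_dvd assms .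
  ultimately have "CHAR('a) dvd 2"
    by (rule prime_dvd_power)
  with \<open>prime CHAR('a)\<close> show ?thesis
    by (simp add: primes_dvd_imp_eq)
qed

lemma power_card_UNIV_minus_1:
  fixes x :: "'a::{field,finite}"
  assumes "x \<noteq> 0"
  shows "x ^ (card (UNIV :: 'a set) - 1) = 1"
proof -
  let ?S = "UNIV - {0::'a}"
  have "(\<Prod>y\<in>?S. x * y) = (\<Prod>y\<in>?S. y)"
    by (rule prod.reindex_bij_witness[of _ "\<lambda>y. y / x" "\<lambda>y. x * y"]) (use assms in auto)
  then have "x ^ card ?S = 1"
    by (simp add: prod.distrib)
  then show ?thesis
    by (simp add: card_Diff_singleton)
qed

lemma card_power_eq_le:
  fixes c :: "'a::idom"
  assumes "n \<ge> 1"
  shows "card {x. x ^ n = c} \<le> n"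
proof -
  let ?p = "monom 1 n + [:- c:]"
  have deg: "degree ?p = n"
    using assms by (simp add: degree_add_eq_left degree_monom_eq)
  then have "?p \<noteq> 0"
    using assms by auto
  then have "card {x. poly ?p x = 0} \<le> n"
    using card_poly_roots_bound deg by fastforce
  then show ?thesis
    by (simp add: poly_monom)
qed

lemma ex_power_neq_1:
  assumes "1 \<le> k" and "k < card (UNIV :: 'a::{field,finite} set) - 1"
  shows "\<exists>z::'a. z \<noteq> 0 \<and> z ^ k \<noteq> 1"
proof (rule ccontr)
  assume "\<not> (\<exists>z::'a. z \<noteq> 0 \<and> z ^ k \<noteq> 1)"
  then have "card (UNIV - {0::'a}) \<le> card {z::'a. z ^ k = 1}"
    by (intro card_mono) auto
  also have "\<dots> \<le> k"
    using assms(1) by (rule card_power_eq_le)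
  finally show False
    using assms(2) by (simp add: card_Diff_singleton)
qed

lemma power2_eq_iff_CHAR_2:
  fixes x y :: "'a::idom"
  assumes "CHAR('a) = 2"
  shows "x^2 = y^2 \<longleftrightarrow> x = y"
proof
  assume "x^2 = y^2"
  have "x^2 - y^2 = (x - y)^2"
    using minus_CHAR_2[OF assms, of x y] by (simp add: power2_eq_square algebra_simps)
  with \<open>x^2 = y^2\<close> show "x = y"
    by simp
qed simp

lemma add_eq_0_iff_CHAR_2:
  fixes x y :: "'a::ring_1"
  assumes "CHAR('a) = 2"
  shows "x + y = 0 \<longleftrightarrow> x = y"
  by (simp flip: minus_CHAR_2[OF assms])

lemma linear_eq_0_iff_CHAR_2:
  fixes a b x :: "'a::field"
  assumes "CHAR('a) = 2" and "a \<noteq> 0"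
  shows "a * x + b = 0 \<longleftrightarrow> x = b / a"
  using assms(2) by (auto simp: add_eq_0_iff_CHAR_2[OF assms(1)] field_simps)

lemma power2_power_fixed:
  assumes "x ^ n = (x :: 'a::comm_monoid_mult)"
  shows "(x^2) ^ n = x^2"
proof -
  have "(x^2) ^ n = (x ^ n)^2"
    by (simp only: power_mult[symmetric] mult.commute)
  with assms show ?thesis
    by simp
qed

section \<open>Polynomial identities\<close>

text \<open>\<open>vandermonde4 a b c x * schur22 a b c x\<close> is the determinant of the matrix with rows
  \<open>(1, w, w^4, w^5)\<close> for \<open>w = a, b, c, x\<close>, so \<open>schur22\<close> is the Schur polynomial \<open>s_(2,2)\<close>;
  likewise \<open>vandermonde3 a b c * complete_sym2 a b c\<close> is the one with rows \<open>(1, w, w^4)\<close>.\<close>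

definition vandermonde3 :: "'a::comm_ring_1 \<Rightarrow> 'a \<Rightarrow> 'a \<Rightarrow> 'a" where
  "vandermonde3 a b c = (b - a) * (c - a) * (c - b)"

definition vandermonde4 :: "'a::comm_ring_1 \<Rightarrow> 'a \<Rightarrow> 'a \<Rightarrow> 'a \<Rightarrow> 'a" where
  "vandermonde4 a b c x = (b - a) * (c - a) * (x - a) * (c - b) * (x - b) * (x - c)"

definition complete_sym2 :: "'a::comm_ring_1 \<Rightarrow> 'a \<Rightarrow> 'a \<Rightarrow> 'a" where
  "complete_sym2 a b c = a^2 + b^2 + c^2 + a*b + b*c + c*a"

definition schur22 :: "'a::comm_ring_1 \<Rightarrow> 'a \<Rightarrow> 'a \<Rightarrow> 'a \<Rightarrow> 'a" where
  "schur22 a b c x = (a*b + a*c + a*x + b*c + b*x + c*x)^2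
     - (a + b + c + x) * (a*b*c + a*b*x + a*c*x + b*c*x)"

lemma cramer_014:
  fixes a b c da db dc :: "'a::idom"
  assumes "\<And>k. k \<in> {0, 1, 4} \<Longrightarrow> da * a^k + db * b^k + dc * c^k = 0"
  shows "da * (vandermonde3 a b c * complete_sym2 a b c) = 0"
proof -
  have "da + db + dc = 0" "da * a + db * b + dc * c = 0" "da * a^4 + db * b^4 + dc * c^4 = 0"
    using assms[of 0] assms[of 1] assms[of 4] by simp_all
  then show ?thesis
    unfolding vandermonde3_def complete_sym2_def by algebra
qed

lemma cramer_0145:
  fixes a b c x da db dc dx :: "'a::idom"
  assumes "\<And>k. k \<in> {0, 1, 4, 5} \<Longrightarrow> da * a^k + db * b^k + dc * c^k + dx * x^k = 0"
  shows "dx * (vandermonde4 a b c x * schur22 a b c x) = 0"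
proof -
  have "da + db + dc + dx = 0" "da * a + db * b + dc * c + dx * x = 0"
    "da * a^4 + db * b^4 + dc * c^4 + dx * x^4 = 0" "da * a^5 + db * b^5 + dc * c^5 + dx * x^5 = 0"
    using assms[of 0] assms[of 1] assms[of 4] assms[of 5] by simp_all
  then show ?thesis
    unfolding vandermonde4_def schur22_def by algebra
qed

lemma cofactors_0145:
  fixes a b c x :: "'a::idom"
  defines "da \<equiv> vandermonde3 b c x * complete_sym2 b c x"
    and "db \<equiv> - (vandermonde3 a c x * complete_sym2 a c x)"
    and "dc \<equiv> vandermonde3 a b x * complete_sym2 a b x"
    and "dx \<equiv> - (vandermonde3 a b c * complete_sym2 a b c)"
  shows "k \<in> {0, 1, 4} \<Longrightarrow> da * a^k + db * b^k + dc * c^k + dx * x^k = 0"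
    and "da * a^5 + db * b^5 + dc * c^5 + dx * x^5 = - (vandermonde4 a b c x * schur22 a b c x)"
proof -
  have "da + db + dc + dx = 0" "da * a + db * b + dc * c + dx * x = 0"
    "da * a^4 + db * b^4 + dc * c^4 + dx * x^4 = 0"
    unfolding assms vandermonde3_def complete_sym2_def by algebra+
  then show "k \<in> {0, 1, 4} \<Longrightarrow> da * a^k + db * b^k + dc * c^k + dx * x^k = 0"
    by auto
  show "da * a^5 + db * b^5 + dc * c^5 + dx * x^5 = - (vandermonde4 a b c x * schur22 a b c x)"
    unfolding assms vandermonde3_def vandermonde4_def complete_sym2_def schur22_def by algebra
qed

definition cofactor_vector :: "('b \<Rightarrow> 'a::comm_ring_1) \<Rightarrow> 'b \<Rightarrow> 'b \<Rightarrow> 'b \<Rightarrow> 'b \<Rightarrow> 'b \<Rightarrow> 'a" where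
  "cofactor_vector w u1 u2 u3 u4 u =
    (if u = u1 then vandermonde3 (w u2) (w u3) (w u4) * complete_sym2 (w u2) (w u3) (w u4)
     else if u = u2 then - (vandermonde3 (w u1) (w u3) (w u4) * complete_sym2 (w u1) (w u3) (w u4))
     else if u = u3 then vandermonde3 (w u1) (w u2) (w u4) * complete_sym2 (w u1) (w u2) (w u4)
     else if u = u4 then - (vandermonde3 (w u1) (w u2) (w u3) * complete_sym2 (w u1) (w u2) (w u3))
     else 0)"

lemma cofactor_vector_moments:
  fixes w :: "'b \<Rightarrow> 'a::idom"
  assumes "distinct [u1, u2, u3, u4]" and "schur22 (w u1) (w u2) (w u3) (w u4) = 0"
    and "k \<in> {0, 1, 4, 5}"
  shows "(\<Sum>u\<in>{u1, u2, u3, u4}. cofactor_vector w u1 u2 u3 u4 u * w u ^ k) = 0"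
proof -
  let ?d = "cofactor_vector w u1 u2 u3 u4"
  note cof = cofactors_0145[where a = "w u1" and b = "w u2" and c = "w u3" and x = "w u4"]
  have dvals:
    "?d u1 = vandermonde3 (w u2) (w u3) (w u4) * complete_sym2 (w u2) (w u3) (w u4)"
    "?d u2 = - (vandermonde3 (w u1) (w u3) (w u4) * complete_sym2 (w u1) (w u3) (w u4))"
    "?d u3 = vandermonde3 (w u1) (w u2) (w u4) * complete_sym2 (w u1) (w u2) (w u4)"
    "?d u4 = - (vandermonde3 (w u1) (w u2) (w u3) * complete_sym2 (w u1) (w u2) (w u3))"
    using assms(1) by (auto simp: cofactor_vector_def)
  have "(\<Sum>u\<in>{u1, u2, u3, u4}. ?d u * w u ^ k)
      = ?d u1 * w u1 ^ k + ?d u2 * w u2 ^ k + ?d u3 * w u3 ^ k + ?d u4 * w u4 ^ k"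
    using assms(1) by (simp add: add.assoc)
  also have "\<dots> = 0"
  proof (cases "k = 5")
    case True
    show ?thesis
      unfolding True dvals cof(2) assms(2) by simp
  next
    case False
    with assms(3) have "k \<in> {0, 1, 4}"
      by auto
    then show ?thesis
      unfolding dvals by (rule cof(1))
  qed
  finally show ?thesis .
qed

text \<open>\<open>resolvent\<close> is the Lagrange resolvent, and
  \<open>coresolvent \<omega> a b c = a b c \<cdot> resolvent \<omega> (1/a) (1/b) (1/c)\<close>.\<close>

definition resolvent :: "'a::comm_ring_1 \<Rightarrow> 'a \<Rightarrow> 'a \<Rightarrow> 'a \<Rightarrow> 'a" where
  "resolvent \<omega> a b c = a + \<omega> * b + \<omega>^2 * c"

definition coresolvent :: "'a::comm_ring_1 \<Rightarrow> 'a \<Rightarrow> 'a \<Rightarrow> 'a \<Rightarrow> 'a" where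
  "coresolvent \<omega> a b c = b * c + \<omega> * a * c + \<omega>^2 * a * b"

text \<open>Identities that hold only in characteristic 2 are proved by exhibiting the difference
  of the two sides as twice an explicit polynomial.\<close>

lemma eq_if_CHAR_2_diff:
  assumes "CHAR('a::comm_ring_1) = 2" and "x - y = 2 * (z::'a)"
  shows "x = y"
  using assms of_nat_CHAR[where 'a='a] by simp

lemma complete_sym2_eq_resolvents:
  fixes a b c \<omega> :: "'a::idom"
  assumes "CHAR('a) = 2" and "\<omega>^2 + \<omega> + 1 = 0"
  shows "complete_sym2 a b c = resolvent \<omega> a b c * resolvent (\<omega>^2) a b c"
  by (rule eq_if_CHAR_2_diff[OF assms(1), where z = "a*b + b*c + c*a"])
    (use assms(2) in \<open>unfold complete_sym2_def resolvent_def, algebra\<close>)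

lemma schur22_eq_resolvent_factors:
  fixes a b c x \<omega> :: "'a::idom"
  assumes "CHAR('a) = 2" and "\<omega>^2 + \<omega> + 1 = 0"
  shows "schur22 a b c x
    = (resolvent \<omega> a b c * x + coresolvent \<omega> a b c)
      * (resolvent (\<omega>^2) a b c * x + coresolvent (\<omega>^2) a b c)"
  by (rule eq_if_CHAR_2_diff[OF assms(1),
        where z = "(a + b + c + x) * (a*b*c + a*b*x + a*c*x + b*c*x) - 6*a*b*c*x"])
    (use assms(2) in \<open>unfold schur22_def resolvent_def coresolvent_def, algebra\<close>)

lemma resolvent_coresolvent_diff_sq:
  fixes a b c \<omega> :: "'a::idom"
  assumes "\<omega>^2 + \<omega> + 1 = 0"
  shows "(b - c)^2 = resolvent \<omega> a b c * (\<omega> * c + \<omega>^2 * b) - coresolvent \<omega> a b c"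
  using assms unfolding resolvent_def coresolvent_def by algebra

lemma coresolvent_resolvent_cross:
  fixes a b c \<omega> :: "'a::idom"
  assumes "\<omega>^2 + \<omega> + 1 = 0"
  shows "coresolvent \<omega> a b c * resolvent (\<omega>^2) a b c - coresolvent (\<omega>^2) a b c * resolvent \<omega> a b c
    = (2 * \<omega> + 1) * vandermonde3 a b c"
  using assms unfolding resolvent_def coresolvent_def vandermonde3_def by algebra

lemma schur22_at_point:
  fixes a b c :: "'a::idom"
  assumes "CHAR('a) = 2"
  shows "schur22 a b c a = ((a + b) * (a + c))^2"
    and "schur22 a b c b = ((b + a) * (b + c))^2"
    and "schur22 a b c c = ((c + a) * (c + b))^2"
proof -
  note eqI = eq_if_CHAR_2_diff[OF assms]
  show "schur22 a b c a = ((a + b) * (a + c))^2"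
    by (rule eqI[where z = "a^2 * (b^2 + c^2)"]) (unfold schur22_def, algebra)
  show "schur22 a b c b = ((b + a) * (b + c))^2"
    by (rule eqI[where z = "b^2 * (a^2 + c^2)"]) (unfold schur22_def, algebra)
  show "schur22 a b c c = ((c + a) * (c + b))^2"
    by (rule eqI[where z = "c^2 * (a^2 + b^2)"]) (unfold schur22_def, algebra)
qed

lemma cube_root_unity_power2:
  fixes \<omega> :: "'a::idom"
  assumes "\<omega>^2 + \<omega> + 1 = 0"
  shows "(\<omega>^2)^2 + \<omega>^2 + 1 = 0"
  using assms by algebra

section \<open>The dual of \<open>C_{3,5}\<close>\<close>

lemma mem_dual_code_C35_iff:
  fixes c :: "'a::field \<Rightarrow> 'a"
  shows "c \<in> dual_code q (code_C35 q) \<longleftrightarrow> is_vector q c \<and>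
    (\<Sum>u\<in>roots_unity q. c u * u^3) = 0 \<and> (\<Sum>u\<in>roots_unity q. c u * u^(q-2)) = 0 \<and>
    (\<Sum>u\<in>roots_unity q. c u * u^5) = 0 \<and> (\<Sum>u\<in>roots_unity q. c u * u^(q-4)) = 0"
proof -
  let ?U = "roots_unity q"
  define x :: "'a \<Rightarrow> 'a \<Rightarrow> 'a \<Rightarrow> 'a \<Rightarrow> 'a \<Rightarrow> 'a" where "x a3 aq2 a5 aq4 u =
    (if u \<in> ?U then a3 * u^3 + aq2 * u^(q-2) + a5 * u^5 + aq4 * u^(q-4) else 0)" for a3 aq2 a5 aq4 u
  have code: "y \<in> code_C35 q \<longleftrightarrow> (\<exists>a3 aq2 a5 aq4. y = x a3 aq2 a5 aq4)" for y
    unfolding code_C35_def x_def by (auto simp: fun_eq_iff)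
  have pairing: "(\<Sum>u\<in>?U. c u * x a3 aq2 a5 aq4 u) =
      a3 * (\<Sum>u\<in>?U. c u * u^3) + aq2 * (\<Sum>u\<in>?U. c u * u^(q-2))
      + a5 * (\<Sum>u\<in>?U. c u * u^5) + aq4 * (\<Sum>u\<in>?U. c u * u^(q-4))" for a3 aq2 a5 aq4
    by (simp add: x_def algebra_simps sum.distrib sum_distrib_left)
  show ?thesis
  proof
    assume "c \<in> dual_code q (code_C35 q)"
    moreover have "x a3 aq2 a5 aq4 \<in> code_C35 q" for a3 aq2 a5 aq4
      using code by blast
    ultimately have orth: "(\<Sum>u\<in>?U. c u * x a3 aq2 a5 aq4 u) = 0"
      and "is_vector q c" for a3 aq2 a5 aq4
      by (auto simp: dual_code_def)
    then show "is_vector q c \<and> (\<Sum>u\<in>?U. c u * u^3) = 0 \<and> (\<Sum>u\<in>?U. c u * u^(q-2)) = 0 \<and>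
        (\<Sum>u\<in>?U. c u * u^5) = 0 \<and> (\<Sum>u\<in>?U. c u * u^(q-4)) = 0"
      using orth[of 1 0 0 0] orth[of 0 1 0 0] orth[of 0 0 1 0] orth[of 0 0 0 1]
      unfolding pairing by simp
  next
    assume "is_vector q c \<and> (\<Sum>u\<in>?U. c u * u^3) = 0 \<and> (\<Sum>u\<in>?U. c u * u^(q-2)) = 0 \<and>
        (\<Sum>u\<in>?U. c u * u^5) = 0 \<and> (\<Sum>u\<in>?U. c u * u^(q-4)) = 0"
    then show "c \<in> dual_code q (code_C35 q)"
      by (auto simp: dual_code_def code pairing)
  qed
qed

lemma dual_code_diff:
  assumes "c \<in> dual_code q C" and "c' \<in> dual_code q C"
  shows "(\<lambda>u. c u - c' u) \<in> dual_code q C"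
  using assms by (simp add: dual_code_def is_vector_def left_diff_distrib sum_subtractf)

lemma dual_code_scale:
  assumes "c \<in> dual_code q C"
  shows "(\<lambda>u. s * c u) \<in> dual_code q C"
  using assms by (simp add: dual_code_def is_vector_def mult.assoc flip: sum_distrib_left)

section \<open>The unit circle of \<open>GF(q^2)\<close>\<close>

lemma roots_unity_mult: "u \<in> roots_unity q \<Longrightarrow> v \<in> roots_unity q \<Longrightarrow> u * v \<in> roots_unity q"
  unfolding roots_unity_def by (simp only: mem_Collect_eq power_mult_distrib) simp

lemma roots_unity_power2_iff:
  fixes u :: "'a::field"
  assumes "CHAR('a) = 2"
  shows "u^2 \<in> roots_unity q \<longleftrightarrow> u \<in> roots_unity q"
proof -
  have "(u^2)^(q+1) = (u^(q+1))^2"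
    by (simp only: power_mult[symmetric] mult.commute)
  then show ?thesis
    using power2_eq_iff_CHAR_2[OF assms, of "u^(q+1)" 1] by (simp add: roots_unity_def)
qed

lemma roots_unity_neq_0: "u \<in> roots_unity q \<Longrightarrow> u \<noteq> (0::'a::field)"
  by (auto simp: roots_unity_def)

context
  fixes q e :: nat
  assumes card_UNIV: "card (UNIV :: 'a::{field,finite} set) = q^2"
    and q_eq: "q = 2 ^ e"
begin

abbreviation U :: "'a set" where "U \<equiv> roots_unity q"

lemma CHAR_2: "CHAR('a) = 2"
  using CHAR_eq_2_if_card_UNIV[of "e * 2"] card_UNIV q_eq by (simp add: power_mult)

lemma q_ge_2: "q \<ge> 2"
proof -
  have "2 \<le> card (UNIV :: 'a set)"
    using card_mono[of UNIV "{0, 1::'a}"] by simp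
  then show ?thesis
    using card_UNIV q_eq by (cases e) auto
qed

lemma power_q_add: "(x + y) ^ q = x ^ q + (y::'a) ^ q"
  using freshmans_dream'[where 'a='a, of q e] CHAR_2 q_eq by simp

lemma power_q_sum: "(\<Sum>i\<in>A. f i) ^ q = (\<Sum>i\<in>A. f i ^ q :: 'a)"
  using freshmans_dream_sum'[where 'a='a, of q e] CHAR_2 q_eq by simp

lemma roots_unity_power_q:
  assumes "u \<in> U"
  shows "u ^ q = inverse u"
proof -
  have "u * u ^ q = 1"
    using assms by (simp add: roots_unity_def)
  then show ?thesis
    by (rule inverse_unique[symmetric])
qed

lemma roots_unity_power_diff:
  assumes "u \<in> U" and "k \<le> q + 1"
  shows "u ^ (q + 1 - k) = inverse (u ^ k)"
proof -
  have "u ^ k * u ^ (q + 1 - k) = 1"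
    using assms by (simp add: roots_unity_def flip: power_add)
  then show ?thesis
    by (rule inverse_unique[symmetric])
qed

lemma power_q_minus_1_in_roots_unity:
  assumes "z \<noteq> 0"
  shows "z ^ (q - 1) \<in> U"
proof -
  have "(q - 1) * (q + 1) = q^2 - 1"
    by (simp add: power2_eq_square algebra_simps)
  then have "(z ^ (q - 1)) ^ (q + 1) = z ^ (card (UNIV :: 'a set) - 1)"
    by (simp only: card_UNIV flip: power_mult)
  then show ?thesis
    using power_card_UNIV_minus_1[OF assms] by (simp add: roots_unity_def)
qed

lemma card_roots_unity: "card U = q + 1"
proof (rule antisym)
  show "card U \<le> q + 1"
    unfolding roots_unity_def by (rule card_power_eq_le) simp
next
  let ?S = "UNIV - {0::'a}" and ?f = "\<lambda>z::'a. z ^ (q - 1)"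
  have "(q + 1) * (q - 1) = card ?S"
    using card_UNIV q_ge_2 by (cases q) (simp_all add: card_Diff_singleton power2_eq_square)
  also have "\<dots> = card (\<Union>y\<in>?f ` ?S. {z \<in> ?S. ?f z = y})"
    by (rule arg_cong[where f = card]) auto
  also have "\<dots> \<le> (\<Sum>y\<in>?f ` ?S. card {z \<in> ?S. ?f z = y})"
    by (rule card_UN_le) simp
  also have "\<dots> \<le> (\<Sum>y\<in>?f ` ?S. q - 1)"
  proof (rule sum_mono)
    fix y
    have "card {z \<in> ?S. ?f z = y} \<le> card {z. z ^ (q - 1) = y}"
      by (rule card_mono) auto
    also have "\<dots> \<le> q - 1"
      using q_ge_2 by (intro card_power_eq_le) simp
    finally show "card {z \<in> ?S. ?f z = y} \<le> q - 1" .
  qed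
  also have "\<dots> \<le> card U * (q - 1)"
    using power_q_minus_1_in_roots_unity by (simp add: card_image_le card_mono image_subset_iff)
  finally have "(q + 1) * (q - 1) \<le> card U * (q - 1)" .
  moreover have "q - 1 > 0"
    using q_ge_2 by simp
  ultimately show "q + 1 \<le> card U"
    using mult_le_cancel2 by blast
qed

lemma bij_betw_power2_roots_unity: "bij_betw (\<lambda>u. u^2) U U"
proof -
  have "inj_on (\<lambda>u::'a. u^2) U"
    using power2_eq_iff_CHAR_2[OF CHAR_2] by (auto intro: inj_onI)
  moreover have "(\<lambda>u. u^2) ` U \<subseteq> U"
    using roots_unity_power2_iff[OF CHAR_2] by auto
  ultimately have "(\<lambda>u. u^2) ` U = U"
    by (intro card_subset_eq) (simp_all add: card_image)
  with \<open>inj_on (\<lambda>u::'a. u^2) U\<close> show ?thesis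
    by (simp add: bij_betw_def)
qed

lemma coresolvent_eq_resolvent_power_q:
  assumes "\<omega>^q = \<omega>" and "a \<in> U" "b \<in> U" "c \<in> U"
  shows "coresolvent \<omega> a b c = a * b * c * resolvent \<omega> a b c ^ q"
proof -
  have "resolvent \<omega> a b c ^ q = inverse a + \<omega> * inverse b + \<omega>^2 * inverse c"
    using assms power2_power_fixed[OF assms(1)]
    by (simp add: resolvent_def power_q_add power_mult_distrib roots_unity_power_q)
  then show ?thesis
    using roots_unity_neq_0[OF assms(2)] roots_unity_neq_0[OF assms(3)] roots_unity_neq_0[OF assms(4)]
    by (simp add: coresolvent_def field_simps)
qed

lemma resolvent_neq_0:
  assumes "\<omega>^2 + \<omega> + 1 = 0" "\<omega>^q = \<omega>" and "a \<in> U" "b \<in> U" "c \<in> U" and "b \<noteq> c"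
  shows "resolvent \<omega> a b c \<noteq> 0"
proof
  assume L: "resolvent \<omega> a b c = 0"
  then have "coresolvent \<omega> a b c = 0"
    using coresolvent_eq_resolvent_power_q[OF assms(2-5)] q_ge_2 by simp
  with L have "(b - c)^2 = 0"
    using resolvent_coresolvent_diff_sq[OF assms(1), where a = a and b = b and c = c] by simp
  with assms(6) show False
    by simp
qed

lemma coresolvent_div_resolvent_in_roots_unity:
  assumes "\<omega>^2 + \<omega> + 1 = 0" "\<omega>^q = \<omega>" and "a \<in> U" "b \<in> U" "c \<in> U" and "b \<noteq> c"
  shows "coresolvent \<omega> a b c / resolvent \<omega> a b c \<in> U"
proof -
  let ?L = "resolvent \<omega> a b c"
  have "?L \<noteq> 0"
    by (rule resolvent_neq_0[OF assms])
  then have "coresolvent \<omega> a b c / ?L = a * b * c * ?L ^ (q - 1)"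
    using coresolvent_eq_resolvent_power_q[OF assms(2-5)] q_ge_2 by (simp add: power_diff)
  moreover have "a * b * c \<in> U"
    using assms(3-5) by (intro roots_unity_mult)
  ultimately show ?thesis
    using power_q_minus_1_in_roots_unity[OF \<open>?L \<noteq> 0\<close>] by (simp add: roots_unity_mult)
qed

lemma mem_dual_code_C35_iff_inverse:
  assumes "4 \<le> q"
  shows "c \<in> dual_code q (code_C35 q) \<longleftrightarrow> is_vector q c \<and>
    (\<Sum>u\<in>U. c u * u^3) = 0 \<and> (\<Sum>u\<in>U. c u * inverse (u^3)) = 0 \<and>
    (\<Sum>u\<in>U. c u * u^5) = 0 \<and> (\<Sum>u\<in>U. c u * inverse (u^5)) = 0"
proof -
  have "u^(q-2) = inverse (u^3)" "u^(q-4) = inverse (u^5)" if "u \<in> U" for u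
    using roots_unity_power_diff[OF that, of 3] roots_unity_power_diff[OF that, of 5] assms
    by (simp_all add: numeral_eq_Suc)
  then show ?thesis
    unfolding mem_dual_code_C35_iff by simp
qed

lemma dual_code_C35_power_q:
  fixes c :: "'a \<Rightarrow> 'a"
  assumes "4 \<le> q" and "c \<in> dual_code q (code_C35 q)"
  shows "(\<lambda>u. c u ^ q) \<in> dual_code q (code_C35 q)"
proof -
  have conj: "(u^k) ^ q = inverse (u^k)" "inverse (u^k) ^ q = u^k" if "u \<in> U" for u and k :: nat
  proof -
    have "(u^k) ^ q = (u^q) ^ k"
      by (simp only: power_mult[symmetric] mult.commute)
    then show "(u^k) ^ q = inverse (u^k)"
      using roots_unity_power_q[OF that] by (simp add: power_inverse)
    then show "inverse (u^k) ^ q = u^k"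
      by (simp add: power_inverse)
  qed
  have "(\<Sum>u\<in>U. c u ^ q * u^k) = (\<Sum>u\<in>U. c u * inverse (u^k)) ^ q"
    and "(\<Sum>u\<in>U. c u ^ q * inverse (u^k)) = (\<Sum>u\<in>U. c u * u^k) ^ q" for k
    by (simp_all add: power_q_sum power_mult_distrib conj)
  then show ?thesis
    using assms q_ge_2 unfolding mem_dual_code_C35_iff_inverse[OF assms(1)]
    by (simp add: is_vector_def)
qed

lemma mem_dual_code_C35_iff_moments:
  assumes "4 \<le> q"
  shows "c \<in> dual_code q (code_C35 q) \<longleftrightarrow> is_vector q c \<and>
    (\<forall>k\<in>{0, 1, 4, 5}. (\<Sum>u\<in>U. c u * inverse (u^5) * (u^2)^k) = 0)"
proof -
  have nz: "u \<in> U \<Longrightarrow> u \<noteq> 0" for u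
    by (rule roots_unity_neq_0)
  have "(\<Sum>u\<in>U. c u * inverse (u^5) * (u^2)^1) = (\<Sum>u\<in>U. c u * inverse (u^3))"
    and "(\<Sum>u\<in>U. c u * inverse (u^5) * (u^2)^4) = (\<Sum>u\<in>U. c u * u^3)"
    and "(\<Sum>u\<in>U. c u * inverse (u^5) * (u^2)^5) = (\<Sum>u\<in>U. c u * u^5)"
    by (auto intro!: sum.cong simp: nz field_simps power_mult[symmetric])
  then show ?thesis
    unfolding mem_dual_code_C35_iff_inverse[OF assms] by auto
qed

lemma dual_code_C35_moment_eq_0:
  assumes "4 \<le> q" and "c \<in> dual_code q (code_C35 q)"
    and "S \<subseteq> U" and "\<forall>u\<in>U - S. c u = 0" and "k \<in> {0, 1, 4, 5}"
  shows "(\<Sum>u\<in>S. c u * inverse (u^5) * (u^2)^k) = 0"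
proof -
  have "(\<Sum>u\<in>S. c u * inverse (u^5) * (u^2)^k) = (\<Sum>u\<in>U. c u * inverse (u^5) * (u^2)^k)"
    by (rule sum.mono_neutral_left) (use assms(3,4) in auto)
  also have "\<dots> = 0"
    using assms(2,5) unfolding mem_dual_code_C35_iff_moments[OF assms(1)] by blast
  finally show ?thesis .
qed

lemma mem_dual_code_C35_of_moments:
  assumes "4 \<le> q" and "S \<subseteq> U" and "\<forall>u. u \<notin> S \<longrightarrow> d u = 0"
    and "\<And>k. k \<in> {0, 1, 4, 5} \<Longrightarrow> (\<Sum>u\<in>S. d u * (u^2)^k) = 0"
  shows "(\<lambda>u. d u * u^5) \<in> dual_code q (code_C35 q)"
proof -
  have nz: "u \<in> U \<Longrightarrow> u \<noteq> 0" for u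
    by (rule roots_unity_neq_0)
  have "(\<Sum>u\<in>U. d u * u^5 * inverse (u^5) * (u^2)^k) = (\<Sum>u\<in>S. d u * (u^2)^k)" for k
    using assms(2,3) by (intro sum.mono_neutral_cong_right) (auto simp: nz)
  moreover have "is_vector q (\<lambda>u. d u * u^5)"
    using assms(2,3) by (auto simp: is_vector_def)
  ultimately show ?thesis
    unfolding mem_dual_code_C35_iff_moments[OF assms(1)] using assms(4) by simp
qed

lemma schur22_eq_0_if_dual_support:
  assumes "4 \<le> q" and "c \<in> dual_code q (code_C35 q)"
    and "{u1, u2, u3, u4} \<subseteq> U" "distinct [u1, u2, u3, u4]"
    and "supp_vec q c = {u1, u2, u3, u4}"
  shows "schur22 (u1^2) (u2^2) (u3^2) (u4^2) = 0"
proof -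
  define d where "d u = c u * inverse (u^5)" for u
  have "\<forall>u\<in>U - {u1, u2, u3, u4}. c u = 0"
    using assms(5) by (auto simp: supp_vec_def)
  then have moment: "d u1 * (u1^2)^k + d u2 * (u2^2)^k + d u3 * (u3^2)^k + d u4 * (u4^2)^k = 0"
    if "k \<in> {0, 1, 4, 5}" for k
    using dual_code_C35_moment_eq_0[OF assms(1,2,3) _ that] assms(4) by (simp add: d_def add.assoc)
  have "d u4 * (vandermonde4 (u1^2) (u2^2) (u3^2) (u4^2) * schur22 (u1^2) (u2^2) (u3^2) (u4^2)) = 0"
    using cramer_0145[OF moment] by simp
  moreover have "d u4 \<noteq> 0"
    using assms(3,5) roots_unity_neq_0 by (auto simp: d_def supp_vec_def)
  moreover have "vandermonde4 (u1^2) (u2^2) (u3^2) (u4^2) \<noteq> 0"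
    using assms(4) power2_eq_iff_CHAR_2[OF CHAR_2] by (auto simp: vandermonde4_def)
  ultimately show ?thesis
    by simp
qed

lemma card_roots_unity_power2_preimage: "card {u \<in> U. P (u^2)} = card {x \<in> U. P x}"
proof -
  have "(\<lambda>u. u^2) ` {u \<in> U. P (u^2)} = {x \<in> U. P x}"
    using bij_betw_power2_roots_unity by (auto simp: bij_betw_def)
  moreover have "inj_on (\<lambda>u. u^2) {u \<in> U. P (u^2)}"
    using bij_betw_power2_roots_unity by (auto simp: bij_betw_def intro: inj_on_subset)
  ultimately show ?thesis
    by (metis card_image)
qed

section \<open>The design\<close>

context
  assumes even_e: "even e"
begin

lemma q_ge_4: "4 \<le> q"
proof -
  have "e \<noteq> 0"
    using q_ge_2 q_eq by (intro notI) simp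
  with even_e have "2 \<le> e"
    by presburger
  then have "2 ^ 2 \<le> q"
    unfolding q_eq by (rule power_increasing) simp
  then show ?thesis
    by simp
qed

lemma q_mod_3: "q mod 3 = 1"
proof -
  obtain j where "e = 2 * j"
    using even_e by blast
  then have "q = 4 ^ j"
    using q_eq by (simp add: power_mult)
  moreover have "(4::nat) ^ j mod 3 = (4 mod 3) ^ j mod 3"
    by (rule power_mod[symmetric])
  ultimately show ?thesis
    by simp
qed

lemma ex_cube_root_unity: "\<exists>\<omega>::'a. \<omega>^2 + \<omega> + 1 = 0 \<and> \<omega> ^ q = \<omega>"
proof -
  define k where "k = (q^2 - 1) div 3"
  have "q^2 mod 3 = (q mod 3)^2 mod 3"
    by (simp add: power_mod)
  then have "q^2 mod 3 = 1"
    using q_mod_3 by simp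
  then have k: "3 * k = q^2 - 1"
    unfolding k_def by presburger
  have "16 \<le> q^2"
    using q_ge_4 power_mono[of 4 q 2] by simp
  with k have "1 \<le> k" "k < q^2 - 1"
    by linarith+
  then obtain z :: 'a where z: "z \<noteq> 0" "z ^ k \<noteq> 1"
    using ex_power_neq_1[where 'a = 'a, of k] card_UNIV by auto
  define \<omega> where "\<omega> = z ^ k"
  have "\<omega>^3 = z ^ (3 * k)"
    unfolding \<omega>_def by (simp only: power_mult[symmetric] mult.commute)
  then have \<omega>3: "\<omega>^3 = 1"
    using power_card_UNIV_minus_1[OF z(1)] card_UNIV k by simp
  have "(\<omega> - 1) * (\<omega>^2 + \<omega> + 1) = \<omega>^3 - 1"
    by (simp add: algebra_simps power2_eq_square power3_eq_cube)
  then have "\<omega>^2 + \<omega> + 1 = 0"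
    using \<omega>3 z(2) by (simp add: \<omega>_def)
  moreover have "\<omega> ^ q = \<omega>"
  proof -
    have "\<omega> ^ q = \<omega> ^ (3 * (q div 3) + q mod 3)"
      by (simp only: mult_div_mod_eq)
    also have "\<dots> = (\<omega>^3) ^ (q div 3) * \<omega>"
      by (simp only: q_mod_3 power_add power_mult power_one_right)
    finally show ?thesis
      using \<omega>3 by simp
  qed
  ultimately show ?thesis
    by blast
qed

lemma complete_sym2_neq_0:
  assumes "a \<in> U" "b \<in> U" "c \<in> U" and "b \<noteq> c"
  shows "complete_sym2 a b c \<noteq> 0"
proof -
  obtain \<omega> :: 'a where \<omega>: "\<omega>^2 + \<omega> + 1 = 0" "\<omega> ^ q = \<omega>"
    using ex_cube_root_unity by blast
  note \<omega>2 = cube_root_unity_power2[OF \<omega>(1)] power2_power_fixed[OF \<omega>(2)]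
  show ?thesis
    unfolding complete_sym2_eq_resolvents[OF CHAR_2 \<omega>(1)]
    using resolvent_neq_0[OF \<omega> assms] resolvent_neq_0[OF \<omega>2 assms] by simp
qed

lemma vandermonde3_complete_sym2_neq_0:
  assumes "{a, b, c} \<subseteq> U" and "distinct [a, b, c]"
  shows "vandermonde3 a b c * complete_sym2 a b c \<noteq> 0"
  using assms complete_sym2_neq_0[of a b c] by (auto simp: vandermonde3_def)

lemma schur22_roots:
  assumes "{a, b, c} \<subseteq> U" and "distinct [a, b, c]"
  obtains x1 x2 where "x1 \<in> U" "x2 \<in> U" "x1 \<noteq> x2"
    and "\<And>x. schur22 a b c x = 0 \<longleftrightarrow> x = x1 \<or> x = x2"
proof -
  obtain \<omega> :: 'a where \<omega>: "\<omega>^2 + \<omega> + 1 = 0" "\<omega> ^ q = \<omega>"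
    using ex_cube_root_unity by blast
  note \<omega>2 = cube_root_unity_power2[OF \<omega>(1)] power2_power_fixed[OF \<omega>(2)]
  have abc: "a \<in> U" "b \<in> U" "c \<in> U" "b \<noteq> c"
    using assms by auto
  define L1 N1 L2 N2 where "L1 = resolvent \<omega> a b c" and "N1 = coresolvent \<omega> a b c"
    and "L2 = resolvent (\<omega>^2) a b c" and "N2 = coresolvent (\<omega>^2) a b c"
  have L: "L1 \<noteq> 0" "L2 \<noteq> 0"
    unfolding L1_def L2_def using resolvent_neq_0[OF \<omega> abc] resolvent_neq_0[OF \<omega>2 abc] by auto
  have "N1 * L2 - N2 * L1 = vandermonde3 a b c"
    using coresolvent_resolvent_cross[OF \<omega>(1), of a b c] of_nat_CHAR[where 'a='a]
    unfolding L1_def N1_def L2_def N2_def by (simp add: CHAR_2)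
  also have "\<dots> \<noteq> 0"
    using assms(2) by (auto simp: vandermonde3_def)
  finally have "N1 / L1 \<noteq> N2 / L2"
    using L by (auto simp: field_simps)
  moreover have "N1 / L1 \<in> U" "N2 / L2 \<in> U"
    unfolding L1_def N1_def L2_def N2_def
    using coresolvent_div_resolvent_in_roots_unity[OF \<omega> abc]
      coresolvent_div_resolvent_in_roots_unity[OF \<omega>2 abc] by auto
  moreover have "schur22 a b c x = 0 \<longleftrightarrow> x = N1 / L1 \<or> x = N2 / L2" for x
    unfolding schur22_eq_resolvent_factors[OF CHAR_2 \<omega>(1)] L1_def [symmetric] N1_def [symmetric]
      L2_def [symmetric] N2_def [symmetric]
    using linear_eq_0_iff_CHAR_2[OF CHAR_2 L(1)] linear_eq_0_iff_CHAR_2[OF CHAR_2 L(2)] by simp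
  ultimately show ?thesis
    using that by blast
qed

lemma card_schur22_roots:
  assumes "{a, b, c} \<subseteq> U" and "distinct [a, b, c]"
  shows "card {x \<in> U - {a, b, c}. schur22 a b c x = 0} = 2"
proof -
  obtain x1 x2 where x: "x1 \<in> U" "x2 \<in> U" "x1 \<noteq> x2"
    and roots: "\<And>x. schur22 a b c x = 0 \<longleftrightarrow> x = x1 \<or> x = x2"
    using schur22_roots[OF assms] by blast
  have "schur22 a b c a \<noteq> 0" "schur22 a b c b \<noteq> 0" "schur22 a b c c \<noteq> 0"
    using assms(2) by (auto simp: schur22_at_point[OF CHAR_2] add_eq_0_iff_CHAR_2[OF CHAR_2])
  then have "{x \<in> U - {a, b, c}. schur22 a b c x = 0} = {x1, x2}"
    using x roots by auto
  with x(3) show ?thesis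
    by simp
qed

lemma dual_code_C35_eq_0_if_three_points:
  assumes "c \<in> dual_code q (code_C35 q)"
    and "{a, b, x} \<subseteq> U" "distinct [a, b, x]" and "\<forall>u\<in>U - {a, b, x}. c u = 0"
  shows "c = (\<lambda>_. 0)"
proof -
  have first: "c a = 0"
    if "{a, b, x} \<subseteq> U" "distinct [a, b, x]" "\<forall>u\<in>U - {a, b, x}. c u = 0" for a b x
  proof -
    define d where "d u = c u * inverse (u^5)" for u
    have moment: "d a * (a^2)^k + d b * (b^2)^k + d x * (x^2)^k = 0" if "k \<in> {0, 1, 4}" for k
      using dual_code_C35_moment_eq_0[OF q_ge_4 assms(1) \<open>{a, b, x} \<subseteq> U\<close>, of k] that
        \<open>distinct [a, b, x]\<close> \<open>\<forall>u\<in>U - {a, b, x}. c u = 0\<close>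
      by (auto simp: d_def add.assoc)
    have "d a * (vandermonde3 (a^2) (b^2) (x^2) * complete_sym2 (a^2) (b^2) (x^2)) = 0"
      using cramer_014[OF moment] by simp
    moreover have "vandermonde3 (a^2) (b^2) (x^2) * complete_sym2 (a^2) (b^2) (x^2) \<noteq> 0"
      using that(1,2) roots_unity_power2_iff[OF CHAR_2] power2_eq_iff_CHAR_2[OF CHAR_2]
      by (intro vandermonde3_complete_sym2_neq_0) auto
    ultimately show "c a = 0"
      using that(1) roots_unity_neq_0[of a q] by (simp add: d_def)
  qed
  have sets: "{b, a, x} = {a, b, x}" "{x, a, b} = {a, b, x}"
    by auto
  have "c a = 0" "c b = 0" "c x = 0"
    using first[of a b x] first[of b a x] first[of x a b] assms(2-4) unfolding sets by auto
  moreover have "c u = 0" if "u \<notin> U" for u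
    using assms(1) that by (simp add: dual_code_def is_vector_def)
  ultimately show ?thesis
    using assms(4) by fastforce
qed

lemma ex_moments_vanishing_on_support:
  assumes "{u1, u2, u3, u4} \<subseteq> U" "distinct [u1, u2, u3, u4]"
    and "schur22 (u1^2) (u2^2) (u3^2) (u4^2) = 0"
  obtains d where "\<forall>u. u \<notin> {u1, u2, u3, u4} \<longrightarrow> d u = 0" "\<forall>u\<in>{u1, u2, u3, u4}. d u \<noteq> 0"
    and "\<And>k. k \<in> {0, 1, 4, 5} \<Longrightarrow> (\<Sum>u\<in>{u1, u2, u3, u4}. d u * (u^2)^k) = 0"
proof -
  let ?d = "cofactor_vector (\<lambda>u. u^2) u1 u2 u3 u4"
  have "{u1^2, u2^2, u3^2, u4^2} \<subseteq> U" "distinct [u1^2, u2^2, u3^2, u4^2]"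
    using assms(1,2) roots_unity_power2_iff[OF CHAR_2] power2_eq_iff_CHAR_2[OF CHAR_2] by auto
  then have "\<forall>u\<in>{u1, u2, u3, u4}. ?d u \<noteq> 0"
    using assms(2) vandermonde3_complete_sym2_neq_0[of "u2^2" "u3^2" "u4^2"]
      vandermonde3_complete_sym2_neq_0[of "u1^2" "u3^2" "u4^2"]
      vandermonde3_complete_sym2_neq_0[of "u1^2" "u2^2" "u4^2"]
      vandermonde3_complete_sym2_neq_0[of "u1^2" "u2^2" "u3^2"]
    by (auto simp: cofactor_vector_def)
  moreover have "\<forall>u. u \<notin> {u1, u2, u3, u4} \<longrightarrow> ?d u = 0"
    by (simp add: cofactor_vector_def)
  moreover have "(\<Sum>u\<in>{u1, u2, u3, u4}. ?d u * (u^2)^k) = 0" if "k \<in> {0, 1, 4, 5}" for k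
    by (rule cofactor_vector_moments[where w = "\<lambda>u. u^2", OF assms(2,3) that])
  ultimately show ?thesis
    using that by blast
qed

lemma ex_dual_code_C35_support:
  assumes "{u1, u2, u3, u4} \<subseteq> U" "distinct [u1, u2, u3, u4]"
    and "schur22 (u1^2) (u2^2) (u3^2) (u4^2) = 0"
  shows "\<exists>c\<in>dual_code q (code_C35 q). supp_vec q c = {u1, u2, u3, u4}"
proof -
  obtain d where d_out: "\<forall>u. u \<notin> {u1, u2, u3, u4} \<longrightarrow> d u = 0"
    and d_nz: "\<forall>u\<in>{u1, u2, u3, u4}. d u \<noteq> 0"
    and moments: "\<And>k. k \<in> {0, 1, 4, 5} \<Longrightarrow> (\<Sum>u\<in>{u1, u2, u3, u4}. d u * (u^2)^k) = 0"
    using ex_moments_vanishing_on_support[OF assms] by blast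
  have "(\<lambda>u. d u * u^5) \<in> dual_code q (code_C35 q)"
    using q_ge_4 assms(1) d_out moments by (rule mem_dual_code_C35_of_moments)
  moreover have "supp_vec q (\<lambda>u. d u * u^5) = {u1, u2, u3, u4}"
    using assms(1) d_out d_nz roots_unity_neq_0[of _ q] by (auto simp: supp_vec_def)
  ultimately show ?thesis
    by blast
qed

lemma ex_subfield_codeword_same_support:
  fixes c :: "'a \<Rightarrow> 'a"
  assumes "c \<in> dual_code q (code_C35 q)"
    and "supp_vec q c = {u1, u2, u3, u4}" "distinct [u1, u2, u3, u4]"
  shows "\<exists>c'\<in>subfield_subcode q (dual_code q (code_C35 q)). supp_vec q c' = {u1, u2, u3, u4}"
proof -
  have S: "{u1, u2, u3, u4} \<subseteq> U" "\<forall>u. u \<notin> {u1, u2, u3, u4} \<longrightarrow> c u = 0" "c u1 \<noteq> 0"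
    using assms(1,2) by (auto simp: supp_vec_def dual_code_def is_vector_def set_eq_iff)
  txt \<open>After scaling to \<open>c1 u1 = 1\<close>, the codewords \<open>c1\<close> and \<open>c1^q\<close> agree at \<open>u1\<close>,
    so their difference is supported on three points.\<close>
  define c1 where "c1 u = inverse (c u1) * c u" for u
  have c1: "c1 \<in> dual_code q (code_C35 q)"
    unfolding c1_def using assms(1) by (rule dual_code_scale)
  have "(\<lambda>u. c1 u - c1 u ^ q) \<in> dual_code q (code_C35 q)"
    using c1 dual_code_C35_power_q[OF q_ge_4 c1] by (rule dual_code_diff)
  moreover have "\<forall>u\<in>U - {u2, u3, u4}. c1 u - c1 u ^ q = 0"
  proof
    fix u assume "u \<in> U - {u2, u3, u4}"
    then have "u = u1 \<or> c u = 0"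
      using S(2) by auto
    then show "c1 u - c1 u ^ q = 0"
      using S(3) q_ge_2 by (auto simp: c1_def)
  qed
  ultimately have "(\<lambda>u. c1 u - c1 u ^ q) = (\<lambda>_. 0)"
    using S(1) assms(3) by (intro dual_code_C35_eq_0_if_three_points) auto
  then have "\<forall>u\<in>U. c1 u ^ q = c1 u"
    by (metis eq_iff_diff_eq_0)
  moreover have "supp_vec q c1 = supp_vec q c"
    using S(3) by (auto simp: supp_vec_def c1_def)
  ultimately show ?thesis
    using c1 assms(2) unfolding subfield_subcode_def by blast
qed

abbreviation design_blocks :: "'a set set" where
  "design_blocks \<equiv> blocks_w q 4 (subfield_subcode q (dual_code q (code_C35 q)))"

lemma mem_design_blocks_iff:
  assumes "{u1, u2, u3, u4} \<subseteq> U" "distinct [u1, u2, u3, u4]"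
  shows "{u1, u2, u3, u4} \<in> design_blocks \<longleftrightarrow> schur22 (u1^2) (u2^2) (u3^2) (u4^2) = 0"
proof
  assume "{u1, u2, u3, u4} \<in> design_blocks"
  then have "\<exists>c. {u1, u2, u3, u4} = supp_vec q c \<and> c \<in> subfield_subcode q (dual_code q (code_C35 q))
      \<and> card (supp_vec q c) = 4"
    by (simp only: blocks_w_def mem_Collect_eq)
  then obtain c where supp: "{u1, u2, u3, u4} = supp_vec q c"
    and c: "c \<in> subfield_subcode q (dual_code q (code_C35 q))"
    by (elim exE conjE)
  from c have "c \<in> dual_code q (code_C35 q)"
    by (simp add: subfield_subcode_def)
  then show "schur22 (u1^2) (u2^2) (u3^2) (u4^2) = 0"
    by (rule schur22_eq_0_if_dual_support[OF q_ge_4 _ assms supp[symmetric]])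
next
  assume "schur22 (u1^2) (u2^2) (u3^2) (u4^2) = 0"
  then obtain c where c: "c \<in> dual_code q (code_C35 q)" "supp_vec q c = {u1, u2, u3, u4}"
    using ex_dual_code_C35_support[OF assms] by blast
  obtain c' where c': "c' \<in> subfield_subcode q (dual_code q (code_C35 q))"
    "supp_vec q c' = {u1, u2, u3, u4}"
    using ex_subfield_codeword_same_support[OF c assms(2)] by blast
  moreover have "card {u1, u2, u3, u4} = 4"
    using assms(2) by simp
  ultimately show "{u1, u2, u3, u4} \<in> design_blocks"
    unfolding blocks_w_def mem_Collect_eq by (intro exI[of _ c'] conjI) simp_all
qed

lemma design_blocks_containing_eq:
  assumes "{u1, u2, u3} \<subseteq> U" and "distinct [u1, u2, u3]"
  defines "T \<equiv> {u1, u2, u3}"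
  shows "{B \<in> design_blocks. T \<subseteq> B}
    = (\<lambda>u. insert u T) ` {u \<in> U - T. schur22 (u1^2) (u2^2) (u3^2) (u^2) = 0}"
proof -
  have block_iff: "insert u T \<in> design_blocks \<longleftrightarrow> schur22 (u1^2) (u2^2) (u3^2) (u^2) = 0"
    if "u \<in> U - T" for u
  proof -
    have "insert u T = {u1, u2, u3, u}" "{u1, u2, u3, u} \<subseteq> U" "distinct [u1, u2, u3, u]"
      using that assms by auto
    then show ?thesis
      using mem_design_blocks_iff by simp
  qed
  have cover: "\<exists>u\<in>U - T. B = insert u T" if "B \<in> design_blocks" "T \<subseteq> B" for B
  proof -
    have "B \<subseteq> U" "card B = 4"
      using that(1) by (auto simp: blocks_w_def supp_vec_def)
    moreover have "finite B"
      using \<open>card B = 4\<close> by (intro card_ge_0_finite) simp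
    ultimately have "card (B - T) = 1"
      using that(2) assms(2) by (simp add: card_Diff_subset finite_subset T_def)
    then obtain u where "B - T = {u}"
      by (rule card_1_singletonE)
    then have "u \<in> U - T" "B = insert u T"
      using that(2) \<open>B \<subseteq> U\<close> by auto
    then show ?thesis
      by blast
  qed
  show ?thesis
  proof (intro set_eqI iffI)
    fix B assume B: "B \<in> {B \<in> design_blocks. T \<subseteq> B}"
    then obtain u where "u \<in> U - T" "B = insert u T"
      using cover by blast
    with B block_iff show "B \<in> (\<lambda>u. insert u T) ` {u \<in> U - T. schur22 (u1^2) (u2^2) (u3^2) (u^2) = 0}"
      by auto
  next
    fix B assume "B \<in> (\<lambda>u. insert u T) ` {u \<in> U - T. schur22 (u1^2) (u2^2) (u3^2) (u^2) = 0}"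
    then obtain u where "u \<in> U - T" "schur22 (u1^2) (u2^2) (u3^2) (u^2) = 0" "B = insert u T"
      by blast
    with block_iff show "B \<in> {B \<in> design_blocks. T \<subseteq> B}"
      by auto
  qed
qed

lemma card_design_blocks_containing:
  assumes "T \<subseteq> U" and "card T = 3"
  shows "card {B \<in> design_blocks. T \<subseteq> B} = 2"
proof -
  obtain u1 u2 u3 where T: "T = {u1, u2, u3}" "distinct [u1, u2, u3]"
    using assms(2) by (auto simp: card_3_iff)
  let ?roots = "{u \<in> U - T. schur22 (u1^2) (u2^2) (u3^2) (u^2) = 0}"
  have "card {B \<in> design_blocks. T \<subseteq> B} = card ((\<lambda>u. insert u T) ` ?roots)"
    using design_blocks_containing_eq[of u1 u2 u3] assms(1) T by simp
  also have "\<dots> = card ?roots"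
    by (rule card_image) (auto intro!: inj_onI)
  also have "?roots = {u \<in> U. u^2 \<notin> {u1^2, u2^2, u3^2} \<and> schur22 (u1^2) (u2^2) (u3^2) (u^2) = 0}"
    using assms(1) T power2_eq_iff_CHAR_2[OF CHAR_2] by auto
  also have "card \<dots> = card {x \<in> U - {u1^2, u2^2, u3^2}. schur22 (u1^2) (u2^2) (u3^2) x = 0}"
    by (subst card_roots_unity_power2_preimage) (rule arg_cong[where f = card], auto)
  also have "\<dots> = 2"
    using assms(1) T roots_unity_power2_iff[OF CHAR_2] power2_eq_iff_CHAR_2[OF CHAR_2]
    by (intro card_schur22_roots) auto
  finally show ?thesis .
qed

lemma is_design_C35: "is_design 3 (q + 1) 4 2 U design_blocks"
  unfolding is_design_def using card_roots_unity card_design_blocks_containing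
  by (auto simp: blocks_w_def supp_vec_def)

end

end

theorem theorem27:
  fixes m q :: nat
  assumes "m \<ge> 4" and "even m" and "q = 2 ^ m"
    and "card (UNIV :: 'a set) = q ^ 2"
  shows "is_design 3 (q + 1) 4 2 (roots_unity q :: ('a::{field,finite}) set)
           (blocks_w q 4 (subfield_subcode q (dual_code q (code_C35 q :: ('a \<Rightarrow> 'a) set))))"
  using is_design_C35[of q m] assms by blast

end
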